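(* Let $m \geq 13$ be an odd integer. The digraph $L_{2m}$ admits a $\vec{C}_m$-factorization if and only if $3 \nmid m$.
   Context: $L_{2m} = \vec{X}(m,\{1,3\}) \wr \overline{K}_2$ is the digraph with vertex set $\{x_a, y_a : a \in \mathbb{Z}_m\}$ whose arcs are exactly $(u_a, v_b)$ for all $u, v \in \{x,y\}$ and all $a,b \in \mathbb{Z}_m$ with $b - a \equiv 1$ or $b-a \equiv 3 \pmod m$. A $\vec{C}_m$-factor of a digraph is a spanning subdigraph that is a disjoint union of directed $m$-cycles; a $\vec{C}_m$-factorization is a partition of the arc set into $\vec{C}_m$-factors. *)

theory Defs
  imports Main
begin

text \<open>Vertices of L_2m: (False, a) is x_a, (True, a) is y_a, with a in {0..<m} representing Z_m.\<close>

definition L_verts :: "nat \<Rightarrow> (bool \<times> nat) set" where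
  "L_verts m = UNIV \<times> {0..<m}"

definition L_arcs :: "nat \<Rightarrow> ((bool \<times> nat) \<times> (bool \<times> nat)) set" where
  "L_arcs m = {((u, a), (v, b)) | u v a b. a < m \<and> b < m \<and>
                 (b = (a + 1) mod m \<or> b = (a + 3) mod m)}"

definition is_dicycle :: "nat \<Rightarrow> ('v \<times> 'v) set \<Rightarrow> bool" where
  "is_dicycle k C \<longleftrightarrow> k \<ge> 2 \<and> (\<exists>f :: nat \<Rightarrow> 'v. inj_on f {0..<k} \<and>
       C = {(f i, f (Suc i mod k)) | i. i < k})"

definition arc_verts :: "('v \<times> 'v) set \<Rightarrow> 'v set" where
  "arc_verts C = fst ` C \<union> snd ` C"

definition is_Ck_factor :: "'v set \<Rightarrow> ('v \<times> 'v) set \<Rightarrow> nat \<Rightarrow> ('v \<times> 'v) set \<Rightarrow> bool" where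
  "is_Ck_factor V A k F \<longleftrightarrow> F \<subseteq> A \<and>
     (\<exists>\<C>. (\<forall>C\<in>\<C>. is_dicycle k C) \<and> F = \<Union>\<C> \<and>
          (\<forall>C\<in>\<C>. \<forall>D\<in>\<C>. C \<noteq> D \<longrightarrow> arc_verts C \<inter> arc_verts D = {}) \<and>
          \<Union>(arc_verts ` \<C>) = V)"

definition has_Ck_factorization :: "'v set \<Rightarrow> ('v \<times> 'v) set \<Rightarrow> nat \<Rightarrow> bool" where
  "has_Ck_factorization V A k \<longleftrightarrow>
     (\<exists>\<F>. (\<forall>F\<in>\<F>. is_Ck_factor V A k F) \<and> \<Union>\<F> = A \<and>
          (\<forall>F\<in>\<F>. \<forall>G\<in>\<F>. F \<noteq> G \<longrightarrow> F \<inter> G = {}))"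

end

theory Submission
  imports Defs "HOL-Number_Theory.Cong"
begin

text \<open>The projection of a directed \<open>m\<close>-cycle of \<open>L\<^sub>2\<^sub>m\<close> to \<open>\<int>\<^sub>m\<close> is a closed walk of \<open>m\<close>
  steps of sizes 1 and 3, so \<open>m\<close> divides \<open>m + 2E\<close>, where \<open>E\<close> counts the 3-steps; as \<open>m\<close> is odd,
  \<open>E = 0\<close> or \<open>E = m\<close>. A cycle through the arc \<open>x\<^sub>0 \<rightarrow> x\<^sub>3\<close> thus uses 3-steps only, and if
  \<open>3 dvd m\<close> its projection visits each of \<open>m/3\<close> residues three times, although only two
  vertices lie over each residue.

  Conversely, if \<open>3\<close> does not divide \<open>m\<close>, every lift of the Hamiltonian cycles \<open>a \<mapsto> a + 1\<close> and
  \<open>a \<mapsto> a + 3\<close> of \<open>\<int>\<^sub>m\<close> is a directed \<open>m\<close>-cycle. A proper 3-colouring \<open>c\<close> of the circulant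
  graph \<open>\<int>\<^sub>m(\<plusminus>1, \<plusminus>3)\<close>, which exists for odd \<open>m \<ge> 9\<close>, gives four levellings of \<open>\<int>\<^sub>m\<close>
  (the constant one and the indicators of the colour classes). Lifting the 1-cycle along a
  levelling and the 3-cycle along its complement gives a \<open>C\<^sub>m\<close>-factor, and since \<open>c a \<noteq> c b\<close>
  on every arc \<open>a \<rightarrow> b\<close>, each arc lies in exactly one of the four factors.\<close>

lemma has_Ck_factorization_arc_in_dicycle:
  assumes "has_Ck_factorization V A k" "x \<in> A"
  obtains C where "is_dicycle k C" "C \<subseteq> A" "x \<in> C"
proof -
  obtain \<F> where \<F>: "\<forall>F\<in>\<F>. is_Ck_factor V A k F" "\<Union>\<F> = A"
    using assms(1) unfolding has_Ck_factorization_def by blast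
  then obtain F where F: "F \<in> \<F>" "x \<in> F" using assms(2) by blast
  then obtain \<C> where "F \<subseteq> A" "\<forall>C\<in>\<C>. is_dicycle k C" "F = \<Union>\<C>"
    using \<F>(1) unfolding is_Ck_factor_def by auto
  with F(2) show ?thesis using that by blast
qed

lemma mod_telescope:
  fixes g s :: "nat \<Rightarrow> nat"
  assumes "\<And>i. i < n \<Longrightarrow> g (Suc i) mod m = (g i + s i) mod m"
  shows "g n mod m = (g 0 + (\<Sum>i<n. s i)) mod m"
  using assms
proof (induction n)
  case 0
  show ?case by simp
next
  case (Suc n)
  have "g (Suc n) mod m = (g n mod m + s n) mod m"
    using Suc.prems by (simp add: mod_add_left_eq)
  also have "\<dots> = (g 0 + (\<Sum>i<Suc n. s i)) mod m"
    using Suc by (simp add: mod_add_left_eq add.assoc)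
  finally show ?case .
qed


lemma odd_closed_walk_steps_1_3:
  fixes q :: "nat \<Rightarrow> nat"
  assumes "odd m" "S \<subseteq> {..<m}" "q m = q 0"
    and "\<And>i. i < m \<Longrightarrow> q (Suc i) mod m = (q i + (1 + 2 * of_bool (i \<in> S))) mod m"
  shows "S = {} \<or> S = {..<m}"
proof -
  have "q m mod m = (q 0 + (\<Sum>i<m. 1 + 2 * of_bool (i \<in> S))) mod m"
    using assms(4) by (rule mod_telescope)
  moreover have "(\<Sum>i<m. 1 + 2 * of_bool (i \<in> S)) = m + 2 * card S"
  proof -
    have "{..<m} \<inter> {i. i \<in> S} = S" using assms(2) by blast
    then show ?thesis by (simp only: sum.distrib sum_distrib_left[symmetric]) simp
  qed
  ultimately have "q 0 mod m = (q 0 + 2 * card S) mod m"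
    using assms(3) by (metis add.left_commute mod_add_self1)
  then have "m dvd 2 * card S" using mod_eq_dvd_iff_nat[of "q 0" "q 0 + 2 * card S" m] by simp
  then have "m dvd card S" using assms(1) by (simp add: coprime_dvd_mult_right_iff)
  moreover have "card S \<le> m" using assms(2) by (metis card_lessThan card_mono finite_lessThan)
  ultimately have "card S = 0 \<or> card S = m" by (metis dvd_imp_le le_antisym neq0_conv)
  then show ?thesis
    using assms(2) by (metis card_0_eq card_lessThan card_subset_eq finite_lessThan finite_subset)
qed

lemma dicycle_in_L_arcs_single_difference:
  assumes "odd m" "is_dicycle m C" "C \<subseteq> L_arcs m"
  shows "(\<forall>((u, a), (v, b))\<in>C. b = (a + 1) mod m) \<or> (\<forall>((u, a), (v, b))\<in>C. b = (a + 3) mod m)"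
proof -
  obtain f where C: "C = {(f i, f (Suc i mod m)) | i. i < m}"
    using assms(2) unfolding is_dicycle_def by blast
  define q where "q i = snd (f (i mod m))" for i
  define S where "S = {i. i < m \<and> q (Suc i) \<noteq> (q i + 1) mod m}"
  have step: "q (Suc i) = (q i + 1) mod m \<or> q (Suc i) = (q i + 3) mod m" if "i < m" for i
  proof -
    have "(f i, f (Suc i mod m)) \<in> L_arcs m" using C assms(3) that by blast
    then show ?thesis using that unfolding L_arcs_def q_def by auto
  qed
  have "q (Suc i) mod m = (q i + (1 + 2 * of_bool (i \<in> S))) mod m" if "i < m" for i
  proof (cases "i \<in> S")
    case True
    then have "q (Suc i) = (q i + 3) mod m" using step[OF that] by (auto simp: S_def)
    with True show ?thesis by (simp add: numeral_3_eq_3)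
  next
    case False
    then have "q (Suc i) = (q i + 1) mod m" using that by (simp add: S_def)
    with False show ?thesis by simp
  qed
  moreover have "S \<subseteq> {..<m}" "q m = q 0" by (auto simp: S_def q_def)
  ultimately have "S = {} \<or> S = {..<m}" using odd_closed_walk_steps_1_3[OF assms(1)] by blast
  moreover have arc: "\<exists>i<m. a = q i \<and> b = q (Suc i)" if arc_in_C: "((u, a), (v, b)) \<in> C" for u a v b
  proof -
    obtain i where "i < m" "f i = (u, a)" "f (Suc i mod m) = (v, b)" using arc_in_C by (auto simp: C)
    then show ?thesis unfolding q_def by (intro exI[of _ i]) auto
  qed
  ultimately show ?thesis
  proof (elim disjE)
    assume "S = {}"
    then have "b = (a + 1) mod m" if "((u, a), (v, b)) \<in> C" for u a v b
      using arc[OF that] unfolding S_def by blast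
    then show ?thesis by blast
  next
    assume "S = {..<m}"
    then have "b = (a + 3) mod m" if "((u, a), (v, b)) \<in> C" for u a v b
      using arc[OF that] step unfolding S_def by blast
    then show ?thesis by blast
  qed
qed

lemma dicycle_in_L_arcs_difference_3_not_dvd:
  assumes "is_dicycle m C" "C \<subseteq> L_arcs m" "\<forall>((u, a), (v, b))\<in>C. b = (a + 3) mod m"
  shows "\<not> 3 dvd m"
proof
  assume "3 dvd m"
  then obtain k where k: "m = 3 * k" ..
  obtain f where inj: "inj_on f {0..<m}" and C: "C = {(f i, f (Suc i mod m)) | i. i < m}"
    and "m \<ge> 2"
    using assms(1) unfolding is_dicycle_def by blast
  then have "k > 0" using k by simp
  define q where "q i = snd (f i)" for i
  have q_lt: "q i < m" if "i < m" for i
    using that assms(2) C unfolding q_def L_arcs_def by fastforce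
  have "q (Suc i) mod m = (q i + 3) mod m" if "i < 2 * k" for i
  proof -
    have "(f i, f (Suc i)) \<in> C" using that k by (auto simp: C intro!: exI[of _ i])
    then show ?thesis using assms(3) unfolding q_def by auto
  qed
  then have q_mult: "q j mod m = (q 0 + 3 * j) mod m" if "j \<le> 2 * k" for j
    using mod_telescope[of j q m "\<lambda>_. 3"] that by (simp add: mult.commute)
  have "q k mod m = (q 0 + m) mod m" "q (2 * k) mod m = (q 0 + m + m) mod m"
    using q_mult[of k] q_mult[of "2 * k"] k by (simp_all add: algebra_simps)
  moreover have "0 < m" "k < m" "2 * k < m" using k \<open>k > 0\<close> by simp_all
  ultimately have "q k = q 0" "q (2 * k) = q 0" using q_lt by simp_all
  moreover have "f 0 \<noteq> f k" "f 0 \<noteq> f (2 * k)" "f k \<noteq> f (2 * k)"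
    using inj k \<open>k > 0\<close> by (auto dest: inj_onD)
  moreover have "fst (f 0) = fst (f k) \<or> fst (f 0) = fst (f (2 * k)) \<or> fst (f k) = fst (f (2 * k))"
    \<comment> \<open>three vertices over the same residue, but only two levels\<close>
    by auto
  ultimately show False unfolding q_def by (auto simp: prod_eq_iff)
qed

lemma bij_betw_mult_mod:
  fixes d m :: nat
  assumes "coprime d m"
  shows "bij_betw (\<lambda>j. d * j mod m) {0..<m} {0..<m}"
proof -
  have inj: "inj_on (\<lambda>j. d * j mod m) {0..<m}"
  proof (rule inj_onI)
    fix i j assume "i \<in> {0..<m}" "j \<in> {0..<m}" "d * i mod m = d * j mod m"
    then have "[i = j] (mod m)" using cong_mult_lcancel_nat[OF assms] by (simp add: cong_def)
    with \<open>i \<in> {0..<m}\<close> \<open>j \<in> {0..<m}\<close> show "i = j" by (simp add: cong_less_modulus_unique_nat)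
  qed
  moreover have "(\<lambda>j. d * j mod m) ` {0..<m} \<subseteq> {0..<m}" by (auto intro!: mod_less_divisor)
  ultimately show ?thesis
    by (simp add: bij_betw_def endo_inj_surj)
qed

definition lifted_cycle :: "nat \<Rightarrow> nat \<Rightarrow> (nat \<Rightarrow> bool) \<Rightarrow> ((bool \<times> nat) \<times> (bool \<times> nat)) set" where
  "lifted_cycle m d h = {((h a, a), (h ((a + d) mod m), (a + d) mod m)) | a. a < m}"

lemma mem_lifted_cycle:
  "x \<in> lifted_cycle m d h \<longleftrightarrow> (\<exists>a<m. x = ((h a, a), (h ((a + d) mod m), (a + d) mod m)))"
  unfolding lifted_cycle_def by blast

lemma lifted_cycle_is_dicycle:
  assumes "m \<ge> 2" "coprime d m"
  shows "is_dicycle m (lifted_cycle m d h)"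
  unfolding is_dicycle_def
proof (intro conjI exI)
  define \<sigma> where "\<sigma> j = d * j mod m" for j
  have \<sigma>: "bij_betw \<sigma> {0..<m} {0..<m}" unfolding \<sigma>_def using assms(2) by (rule bij_betw_mult_mod)
  have \<sigma>_Suc: "\<sigma> (Suc j mod m) = (\<sigma> j + d) mod m" for j
    unfolding \<sigma>_def by (simp add: mod_mult_right_eq mod_add_right_eq add.commute)
  let ?f = "\<lambda>j. (h (\<sigma> j), \<sigma> j)"
  show "m \<ge> 2" by fact
  show "inj_on ?f {0..<m}" using \<sigma> unfolding bij_betw_def inj_on_def by auto
  show "lifted_cycle m d h = {(?f i, ?f (Suc i mod m)) | i. i < m}"
  proof (intro equalityI subsetI)
    fix x assume "x \<in> lifted_cycle m d h"
    then obtain a where a: "a < m" "x = ((h a, a), (h ((a + d) mod m), (a + d) mod m))"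
      unfolding mem_lifted_cycle by blast
    have "a \<in> \<sigma> ` {0..<m}" using a(1) by (simp add: bij_betw_imp_surj_on[OF \<sigma>])
    then obtain j where "j < m" "\<sigma> j = a" by auto
    then show "x \<in> {(?f i, ?f (Suc i mod m)) | i. i < m}" using a \<sigma>_Suc[of j] by auto
  next
    fix x assume "x \<in> {(?f i, ?f (Suc i mod m)) | i. i < m}"
    then obtain j where j: "j < m" "x = (?f j, ?f (Suc j mod m))" by blast
    then have "\<sigma> j < m" using \<sigma> unfolding bij_betw_def by auto
    then show "x \<in> lifted_cycle m d h" using j \<sigma>_Suc[of j] unfolding mem_lifted_cycle by auto
  qed
qed

lemma arc_verts_lifted_cycle:
  "arc_verts (lifted_cycle m d h) = (\<lambda>a. (h a, a)) ` {0..<m}"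
proof -
  have "fst ` lifted_cycle m d h = (\<lambda>a. (h a, a)) ` {0..<m}"
    unfolding lifted_cycle_def by force
  moreover have "snd ` lifted_cycle m d h \<subseteq> (\<lambda>a. (h a, a)) ` {0..<m}"
    unfolding lifted_cycle_def by auto
  ultimately show ?thesis unfolding arc_verts_def by blast
qed

lemma lifted_cycle_subset_L_arcs:
  "d = 1 \<or> d = 3 \<Longrightarrow> lifted_cycle m d h \<subseteq> L_arcs m"
  unfolding lifted_cycle_def L_arcs_def by auto

definition proper_colouring :: "nat \<Rightarrow> (nat \<Rightarrow> nat) \<Rightarrow> bool" where
  "proper_colouring m c \<longleftrightarrow>
     (\<forall>a<m. c a < 3 \<and> c a \<noteq> c ((a + 1) mod m) \<and> c a \<noteq> c ((a + 3) mod m))"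

definition level :: "(nat \<Rightarrow> nat) \<Rightarrow> nat \<Rightarrow> nat \<Rightarrow> bool" where
  "level c i a \<longleftrightarrow> i = 0 \<or> c a + 1 = i"

lemma level_pair_unique:
  assumes "c a < 3" "c b < 3" "c a \<noteq> c b"
  shows "\<exists>!i. i < 4 \<and> level c i a = u \<and> level c i b = v"
proof -
  have "\<exists>i<4. level c i a = u \<and> level c i b = v"
  proof (cases u; cases v)
    assume "u" "v"
    then show ?thesis by (intro exI[of _ 0]) (simp add: level_def)
  next
    assume "u" "\<not> v"
    then show ?thesis using assms by (intro exI[of _ "c a + 1"]) (auto simp: level_def)
  next
    assume "\<not> u" "v"
    then show ?thesis using assms by (intro exI[of _ "c b + 1"]) (auto simp: level_def)
  next
    assume "\<not> u" "\<not> v"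
    \<comment> \<open>the level of the third colour \<open>3 - c a - c b\<close>\<close>
    then show ?thesis using assms by (intro exI[of _ "4 - c a - c b"]) (auto simp: level_def; presburger)
  qed
  moreover have "i = j"
    if "i < 4" "j < 4" "level c i a = level c j a" "level c i b = level c j b" for i j
    using that assms unfolding level_def by auto
  ultimately show ?thesis by blast
qed

definition factor_of_colouring :: "nat \<Rightarrow> (nat \<Rightarrow> nat) \<Rightarrow> nat \<Rightarrow> ((bool \<times> nat) \<times> (bool \<times> nat)) set" where
  "factor_of_colouring m c i = lifted_cycle m 1 (level c i) \<union> lifted_cycle m 3 (\<lambda>a. \<not> level c i a)"

lemma factor_of_colouring_subset_L_arcs: "factor_of_colouring m c i \<subseteq> L_arcs m"
  unfolding factor_of_colouring_def using lifted_cycle_subset_L_arcs by blast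

lemma factor_of_colouring_is_Ck_factor:
  assumes "m \<ge> 2" "\<not> 3 dvd m"
  shows "is_Ck_factor (L_verts m) (L_arcs m) m (factor_of_colouring m c i)"
  unfolding is_Ck_factor_def
proof (intro conjI exI)
  let ?\<C> = "{lifted_cycle m 1 (level c i), lifted_cycle m 3 (\<lambda>a. \<not> level c i a)}"
  show "factor_of_colouring m c i \<subseteq> L_arcs m" by (rule factor_of_colouring_subset_L_arcs)
  have "coprime 3 m" using assms(2) by (simp add: prime_imp_coprime)
  then show "\<forall>C\<in>?\<C>. is_dicycle m C" using lifted_cycle_is_dicycle assms(1) by auto
  show "factor_of_colouring m c i = \<Union>?\<C>" unfolding factor_of_colouring_def by auto
  show "\<forall>C\<in>?\<C>. \<forall>D\<in>?\<C>. C \<noteq> D \<longrightarrow> arc_verts C \<inter> arc_verts D = {}"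
    by (auto simp: arc_verts_lifted_cycle)
  show "\<Union>(arc_verts ` ?\<C>) = L_verts m"
    by (auto simp: arc_verts_lifted_cycle L_verts_def image_iff)
qed

lemma mod_add_1_neq_mod_add_3:
  fixes m a :: nat
  assumes "m \<ge> 3"
  shows "(a + 1) mod m \<noteq> (a + 3) mod m"
proof
  assume "(a + 1) mod m = (a + 3) mod m"
  then have "m dvd 2" using mod_eq_dvd_iff_nat[of "a + 1" "a + 3" m] by simp
  with assms show False by (auto dest: dvd_imp_le)
qed

lemma L_arc_in_factor_of_colouring_iff:
  assumes "m \<ge> 3" "((u, a), (v, b)) \<in> L_arcs m"
  shows "((u, a), (v, b)) \<in> factor_of_colouring m c i \<longleftrightarrow>
    (if b = (a + 1) mod m then level c i a = u \<and> level c i b = v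
     else level c i a = (\<not> u) \<and> level c i b = (\<not> v))"
  using assms mod_add_1_neq_mod_add_3[OF assms(1), of a]
  by (auto simp: factor_of_colouring_def mem_lifted_cycle L_arcs_def)

lemma has_Ck_factorization_L_of_colouring:
  assumes "m \<ge> 3" "\<not> 3 dvd m" "proper_colouring m c"
  shows "has_Ck_factorization (L_verts m) (L_arcs m) m"
  unfolding has_Ck_factorization_def
proof (intro exI conjI)
  let ?\<F> = "factor_of_colouring m c ` {..<4}"
  have unique: "\<exists>!i. i < 4 \<and> x \<in> factor_of_colouring m c i" if "x \<in> L_arcs m" for x
  proof -
    obtain u a v b where x: "x = ((u, a), (v, b))" "a < m" "b = (a + 1) mod m \<or> b = (a + 3) mod m"
      using \<open>x \<in> L_arcs m\<close> unfolding L_arcs_def by blast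
    then have "c a < 3" "c b < 3" "c a \<noteq> c b"
      using assms(1,3) unfolding proper_colouring_def by auto
    then show ?thesis
      unfolding x(1) L_arc_in_factor_of_colouring_iff[OF assms(1) that[unfolded x(1)]]
      by (cases "b = (a + 1) mod m") (simp_all add: level_pair_unique)
  qed
  show "\<forall>F\<in>?\<F>. is_Ck_factor (L_verts m) (L_arcs m) m F"
    using factor_of_colouring_is_Ck_factor assms(1,2) by auto
  show "\<Union>?\<F> = L_arcs m"
  proof
    show "\<Union>?\<F> \<subseteq> L_arcs m" using factor_of_colouring_subset_L_arcs by blast
    show "L_arcs m \<subseteq> \<Union>?\<F>" using unique by blast
  qed
  show "\<forall>F\<in>?\<F>. \<forall>G\<in>?\<F>. F \<noteq> G \<longrightarrow> F \<inter> G = {}"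
    using unique factor_of_colouring_subset_L_arcs by blast
qed

text \<open>The colours read \<open>0, 1, 0, 1, \<dots>, 0, 1, 2, 1, 2, 0, 2\<close>: the alternating stretch has even
  length \<open>m - 5\<close>, and the tail of length 5 repairs the odd cycle length.\<close>

definition alternating_colouring :: "nat \<Rightarrow> nat \<Rightarrow> nat" where
  "alternating_colouring m a =
     (if a < m - 5 then a mod 2 else if a = m - 4 then 1 else if a = m - 2 then 0 else 2)"

lemma alternating_colouring_neq:
  assumes "odd m" "m \<ge> 9" "a < m" "d = 1 \<or> d = 3"
  shows "alternating_colouring m a \<noteq> alternating_colouring m ((a + d) mod m)"
proof (cases "a + d < m - 5")
  case True
  then show ?thesis using assms(4) by (auto simp: alternating_colouring_def) presburger+
next
  case False
  obtain k where "m = 2 * k + 1" using assms(1) by (rule oddE)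
  then obtain n where n: "m = 2 * n + 9" using assms(2) by (intro that[of "k - 4"]) simp
  obtain j where j: "a = 2 * n + 1 + j" "j < 8"
    using False assms(3,4) n by (intro that[of "a - (2 * n + 1)"]) auto
  have wrap: "(a + d) mod m = (if j + d < 8 then a + d else j + d - 8)"
  proof (cases "j + d < 8")
    case True
    then show ?thesis using j assms(4) n by simp
  next
    case False
    then have "a + d = m + (j + d - 8)" using j n by simp
    then have "(a + d) mod m = (j + d - 8) mod m" by simp
    moreover have "j + d - 8 < m" using j assms(4) n by linarith
    ultimately show ?thesis using False by simp
  qed
  have parity: "(2 * n + 1 + j) mod 2 = (j + 1) mod 2" by presburger
  have "j = 0 \<or> j = 1 \<or> j = 2 \<or> j = 3 \<or> j = 4 \<or> j = 5 \<or> j = 6 \<or> j = 7"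
    using j(2) by linarith
  then show ?thesis using assms(4) unfolding wrap unfolding j(1) n
    by (elim disjE) (simp_all add: alternating_colouring_def parity)
qed

lemma proper_colouring_alternating_colouring:
  assumes "odd m" "m \<ge> 9"
  shows "proper_colouring m (alternating_colouring m)"
  unfolding proper_colouring_def
proof (intro allI impI conjI)
  fix a assume "a < m"
  have "a mod 2 < 2" by simp
  then show "alternating_colouring m a < 3" by (auto simp: alternating_colouring_def)
  show "alternating_colouring m a \<noteq> alternating_colouring m ((a + 1) mod m)"
    "alternating_colouring m a \<noteq> alternating_colouring m ((a + 3) mod m)"
    using alternating_colouring_neq[OF assms \<open>a < m\<close>, of 1]
      alternating_colouring_neq[OF assms \<open>a < m\<close>, of 3] by simp_all
qed

theorem mainTheorem4:
  fixes m :: nat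
  assumes "odd m" and "m \<ge> 13"
  shows "has_Ck_factorization (L_verts m) (L_arcs m) m \<longleftrightarrow> \<not> (3 dvd m)"
proof
  assume factorization: "has_Ck_factorization (L_verts m) (L_arcs m) m"
  have "((False, 0), (False, 3)) \<in> L_arcs m" using assms(2) by (auto simp: L_arcs_def)
  then obtain C where C: "is_dicycle m C" "C \<subseteq> L_arcs m" "((False, 0), (False, 3)) \<in> C"
    by (rule has_Ck_factorization_arc_in_dicycle[OF factorization])
  have "\<not> (\<forall>((u, a), (v, b))\<in>C. b = (a + 1) mod m)"
  proof
    assume "\<forall>((u, a), (v, b))\<in>C. b = (a + 1) mod m"
    from bspec[OF this C(3)] have "3 = 1 mod m" by simp
    with assms(2) show False by simp
  qed
  then have "\<forall>((u, a), (v, b))\<in>C. b = (a + 3) mod m"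
    using dicycle_in_L_arcs_single_difference[OF assms(1) C(1,2)] by blast
  then show "\<not> 3 dvd m" using dicycle_in_L_arcs_difference_3_not_dvd C(1,2) by blast
next
  assume "\<not> 3 dvd m"
  then show "has_Ck_factorization (L_verts m) (L_arcs m) m"
    using has_Ck_factorization_L_of_colouring[of m "alternating_colouring m"]
      proper_colouring_alternating_colouring assms by simp
qed

end
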